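(* Let $\mathbf{u}=(u_n)$ be an a-sequence. Then the torsion subgroup $t(s_\mathbf{u}(\mathbb{T}))$ of $s_\mathbf{u}(\mathbb{T})$ is dense in $s_\mathbf{u}(\mathbb{T})$ with respect to the restriction of the topology $\tau_\mathbf{u}$ to $s_\mathbf{u}(\mathbb{T})$.
   Context: An a-sequence is a strictly increasing sequence of integers $\mathbf{u}=(u_n)_{n\in\mathbb{N}}$ with $u_n\mid u_{n+1}$ for all $n$. $\mathbb{T}=\mathbb{R}/\mathbb{Z}$, $\|x\|$ is the distance from $x$ to the nearest integer, $d(x,y)=\|x-y\|$. $s_\mathbf{u}(\mathbb{T})=\{x\in\mathbb{T}: u_nx\to0\text{ in }\mathbb{T}\}$. $\tau_\mathbf{u}$ is the topology on $\mathbb{T}$ induced by the metric $\varrho_\mathbf{u}(x,y)=\sup_n\max\{d(x,y),d(u_nx,u_ny)\}$. *)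

theory Defs
  imports "HOL-Analysis.Analysis"
begin

text \<open>Elements of the circle group T = R/Z are represented by real representatives;
  all notions below are 1-periodic, hence well defined on T.\<close>

definition a_sequence :: "(nat \<Rightarrow> int) \<Rightarrow> bool" where
  "a_sequence u \<longleftrightarrow> strict_mono u \<and> (\<forall>n. u n dvd u (Suc n))"

definition tnorm :: "real \<Rightarrow> real" where
  "tnorm x = \<bar>x - real_of_int (round x)\<bar>"

definition tdist :: "real \<Rightarrow> real \<Rightarrow> real" where
  "tdist x y = tnorm (x - y)"

definition s_u :: "(nat \<Rightarrow> int) \<Rightarrow> real set" where
  "s_u u = {x. (\<lambda>n. tnorm (real_of_int (u n) * x)) \<longlonglongrightarrow> 0}"

text \<open>The metric rho_u defining tau_u.\<close>
definition rho_u :: "(nat \<Rightarrow> int) \<Rightarrow> real \<Rightarrow> real \<Rightarrow> real" where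
  "rho_u u x y = (SUP n. max (tdist x y) (tdist (real_of_int (u n) * x) (real_of_int (u n) * y)))"

definition torsion_T :: "real set" where
  "torsion_T = {x. \<exists>m::nat. m > 0 \<and> real m * x \<in> \<int>}"

end

theory Submission
  imports Defs
begin

text \<open>Given x in s_u(T) and \<epsilon> > 0, choose N with \<parallel>u_n x\<parallel> < \<epsilon>/2 for all n \<ge> N and let y be the
  point of (1/u_N)\<int> nearest to x. Then y is torsion, u_n y = 0 in T for n \<ge> N (as u_N divides u_n),
  so y \<in> s_u(T) and d(u_n x, u_n y) = \<parallel>u_n x\<parallel> there; for n < N, |u_n| \<le> |u_N| gives
  |u_n (x - y)| \<le> \<parallel>u_N x\<parallel>. Hence \<rho>_u(x, y) \<le> \<epsilon>/2.\<close>

lemma tnorm_nonneg: "tnorm x \<ge> 0"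
  unfolding tnorm_def by simp

lemma tnorm_le_abs: "tnorm x \<le> \<bar>x\<bar>"
  using round_diff_minimal[of x 0] by (simp add: tnorm_def)

lemma tnorm_diff_of_int: "tnorm (x - of_int k) = tnorm x"
proof (rule antisym)
  show "tnorm (x - of_int k) \<le> tnorm x"
    using round_diff_minimal[of "x - of_int k" "round x - k"] by (simp add: tnorm_def)
  show "tnorm x \<le> tnorm (x - of_int k)"
    using round_diff_minimal[of x "round (x - of_int k) + k"] by (simp add: tnorm_def algebra_simps)
qed

lemma tnorm_diff_Ints: "k \<in> \<int> \<Longrightarrow> tnorm (x - k) = tnorm x"
  by (elim Ints_cases) (simp add: tnorm_diff_of_int)

lemma tnorm_Ints: "k \<in> \<int> \<Longrightarrow> tnorm k = 0"
  using tnorm_diff_Ints[of k k] by (simp add: tnorm_def)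

lemma a_sequence_dvd:
  assumes "a_sequence u" "n \<le> m"
  shows "u n dvd u m"
  using assms(2)
proof (induction m rule: dec_induct)
  case (step k)
  moreover have "u k dvd u (Suc k)"
    using assms(1) unfolding a_sequence_def by blast
  ultimately show ?case by (blast intro: dvd_trans)
qed simp

lemma a_sequence_nonzero:
  assumes "a_sequence u"
  shows "u n \<noteq> 0"
proof
  assume "u n = 0"
  moreover have "u n dvd u (Suc n)" "u n < u (Suc n)"
    using assms unfolding a_sequence_def strict_mono_def by auto
  ultimately show False by simp
qed

lemma a_sequence_abs_mono:
  assumes "a_sequence u" "n \<le> m"
  shows "\<bar>u n\<bar> \<le> \<bar>u m\<bar>"
  using a_sequence_dvd[OF assms] a_sequence_nonzero[OF assms(1), of m]
  by (simp add: zdvd_imp_le)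

lemma of_int_div_in_torsion_T:
  assumes "a \<noteq> 0"
  shows "of_int k / of_int a \<in> torsion_T"
  unfolding torsion_T_def
proof (intro CollectI exI conjI)
  show "nat \<bar>a\<bar> > 0"
    using assms by simp
  have "real (nat \<bar>a\<bar>) * (of_int k / of_int a) = of_int (sgn a * k)"
    using assms by (simp add: abs_if)
  then show "real (nat \<bar>a\<bar>) * (of_int k / of_int a) \<in> \<int>"
    by simp
qed

lemma eventually_Ints_in_s_u:
  assumes "\<And>n. n \<ge> N \<Longrightarrow> of_int (u n) * y \<in> \<int>"
  shows "y \<in> s_u u"
  unfolding s_u_def
proof (intro CollectI tendsto_eventually eventually_sequentiallyI)
  fix n assume "n \<ge> N"
  then show "tnorm (of_int (u n) * y) = 0"
    using assms tnorm_Ints by blast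
qed

lemma rho_u_le:
  assumes "\<And>n. tdist (of_int (u n) * x) (of_int (u n) * y) \<le> c" "tdist x y \<le> c"
  shows "rho_u u x y \<le> c"
  unfolding rho_u_def by (rule cSUP_least) (use assms in auto)

text \<open>Below, round (a x) / a is the point of (1/a)\<int> nearest to x.\<close>

lemma tdist_round_div_le_tnorm:
  fixes a m :: int and x :: real
  assumes "a \<noteq> 0" "\<bar>m\<bar> \<le> \<bar>a\<bar>"
  shows "tdist (m * x) (m * (round (a * x) / a)) \<le> tnorm (a * x)"
proof -
  have "m * x - m * (round (a * x) / a) = (m / a) * (a * x - round (a * x))"
    using assms(1) by (simp add: field_simps)
  then have "tdist (m * x) (m * (round (a * x) / a)) \<le> \<bar>m / a\<bar> * tnorm (a * x)"
    unfolding tdist_def using tnorm_le_abs by (metis abs_mult tnorm_def)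
  also have "\<dots> \<le> tnorm (a * x)"
    using assms tnorm_nonneg[of "a * x"]
    by (intro mult_left_le_one_le) (auto simp: abs_divide divide_le_eq_1)
  finally show ?thesis .
qed

lemma mult_round_div_in_Ints:
  fixes a m :: int and x :: real
  assumes "a dvd m"
  shows "m * (round (a * x) / a) \<in> \<int>"
proof -
  obtain c where "m = a * c"
    using assms by (elim dvdE)
  then show ?thesis
    by (cases "a = 0") (simp_all add: Ints_of_int[of "c * round (a * x)", simplified])
qed

theorem propositionD:
  assumes "a_sequence u"
  shows "\<forall>x \<in> s_u u. \<forall>\<epsilon>>0. \<exists>y \<in> torsion_T \<inter> s_u u. rho_u u x y < \<epsilon>"
proof (intro ballI allI impI)
  fix x :: real and \<epsilon> :: real
  assume "x \<in> s_u u" "\<epsilon> > 0"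
  then obtain N where N: "\<And>n. n \<ge> N \<Longrightarrow> tnorm (u n * x) < \<epsilon> / 2"
    unfolding s_u_def using LIMSEQ_D[of _ 0 "\<epsilon> / 2"] tnorm_nonneg by fastforce
  define y where "y = round (u N * x) / u N"
  have u_N: "u N \<noteq> 0"
    using a_sequence_nonzero[OF assms] .
  have Ints: "u n * y \<in> \<int>" if "n \<ge> N" for n
    unfolding y_def using mult_round_div_in_Ints a_sequence_dvd[OF assms that] by blast
  have "tdist (u n * x) (u n * y) \<le> \<epsilon> / 2" for n
  proof (cases "n \<ge> N")
    case True
    then show ?thesis
      using Ints N tnorm_diff_Ints unfolding tdist_def by (metis less_imp_le)
  next
    case False
    then have "\<bar>u n\<bar> \<le> \<bar>u N\<bar>"
      using a_sequence_abs_mono[OF assms] by simp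
    then show ?thesis
      using tdist_round_div_le_tnorm[OF u_N, of "u n" x] N[of N] unfolding y_def by simp
  qed
  moreover have "tdist x y \<le> \<epsilon> / 2"
  proof -
    have "\<bar>1\<bar> \<le> \<bar>u N\<bar>"
      using u_N by simp
    then show ?thesis
      using tdist_round_div_le_tnorm[OF u_N, of 1 x] N[of N] unfolding y_def by simp
  qed
  ultimately have "rho_u u x y \<le> \<epsilon> / 2"
    by (rule rho_u_le)
  then have "rho_u u x y < \<epsilon>"
    using \<open>\<epsilon> > 0\<close> by linarith
  moreover have "y \<in> torsion_T \<inter> s_u u"
    using of_int_div_in_torsion_T[OF u_N] eventually_Ints_in_s_u[OF Ints] y_def by simp
  ultimately show "\<exists>y \<in> torsion_T \<inter> s_u u. rho_u u x y < \<epsilon>"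
    by blast
qed

end
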